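(* Let $n \ge 1$ be an integer and let $t$ be an integer with $0 < t < \frac{n+1}{2}$. Let $\mathcal{I}$ be the input complex, $\mathcal{O}'$ the colorless output complex and $\Xi$ the colorless carrier map of the colorless cross-blockchain transaction (CBT) task on $n+1$ blockchains, as defined in the context. Then there is no continuous map $f : |\mathrm{skel}^t \mathcal{I}| \to |\mathcal{O}'|$ carried by $\Xi$, i.e. there is no continuous $f$ with $f(|\sigma|) \subseteq |\Xi(\sigma)|$ for every simplex $\sigma$ of $\mathrm{skel}^t \mathcal{I}$.
   Context: Setting. There are $n+1$ distinct blockchains $C_0,\dots,C_n$. An $(n+1)$-party cross-blockchain transaction (CBT) touches exactly one block $v_i$ on each blockchain $C_i$, $0 \le i \le n$. Input complex $\mathcal{I}$. The vertices of $\mathcal{I}$ are the $3(n+1)$ pairs $(v_i, a)$ with $0 \le i \le n$ and $a \in \{0,1,\bot\}$. Here $a=0$ means the local transaction on $C_i$ is not committed, $a=1$ means it is committed, and $a=\bot$ means the branch containing the block has been suspended by a fork. A nonempty set of vertices is a simplex of $\mathcal{I}$ if and only if its vertices involve pairwise distinct blocks. Thus $\mathcal{I}$ is pure of dimension $n$. Colorless output complex $\mathcal{O}'$. Its vertices are the two values $0$ (aborted) and $1$ (committed), and its only simplices are the two $0$-simplices $\{0\}$ and $\{1\}$. Colorless carrier map $\Xi$. For a simplex $\sigma$ of $\mathcal{I}$, $\Xi(\sigma)$ is the following subcomplex of $\mathcal{O}'$: - $\Xi(\sigma) = \{1\}$ if every input value in $\sigma$ is $1$; - $\Xi(\sigma)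 = \{0\}$ if some input value in $\sigma$ is $\bot$; - $\Xi(\sigma) = \mathcal{O}'$ (the two points $0$ and $1$) otherwise. Notation. $\mathrm{skel}^t \mathcal{I}$ is the $t$-skeleton of $\mathcal{I}$, the subcomplex of simplices of dimension at most $t$. $|\cdot|$ denotes geometric realization. *)

theory Defs
  imports "HOL-Analysis.Analysis"
begin

(* Geometric realization via barycentric coordinates: points are functions
   'v \<Rightarrow> real, with the product topology (Function_Topology). *)

definition simplex_real :: "'v set \<Rightarrow> ('v \<Rightarrow> real) set" where
  "simplex_real \<sigma> = {x. (\<forall>v. 0 \<le> x v) \<and> (\<forall>v. v \<notin> \<sigma> \<longrightarrow> x v = 0) \<and> sum x \<sigma> = 1}"

definition realization :: "'v set set \<Rightarrow> ('v \<Rightarrow> real) set" where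
  "realization K = \<Union> (simplex_real ` K)"

definition skel :: "nat \<Rightarrow> 'v set set \<Rightarrow> 'v set set" where
  "skel t K = {\<sigma> \<in> K. card \<sigma> \<le> t + 1}"

(* input values: 0 (not committed), 1 (committed), \<bottom> (suspended by fork) *)
datatype inval = In0 | In1 | InBot

(* output values: 0 (aborted), 1 (committed) *)
datatype outval = Out0 | Out1

(* block v_i on blockchain C_i is identified with its index i *)
definition CBT_input :: "nat \<Rightarrow> (nat \<times> inval) set set" where
  "CBT_input n = {\<sigma>. \<sigma> \<noteq> {} \<and> finite \<sigma> \<and> (\<forall>x\<in>\<sigma>. fst x \<le> n) \<and> inj_on fst \<sigma>}"

definition CBT_output :: "outval set set" where
  "CBT_output = {{Out0}, {Out1}}"

definition CBT_carrier :: "(nat \<times> inval) set \<Rightarrow> outval set set" where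
  "CBT_carrier \<sigma> =
     (if (\<forall>x\<in>\<sigma>. snd x = In1) then {{Out1}}
      else if (\<exists>x\<in>\<sigma>. snd x = InBot) then {{Out0}}
      else CBT_output)"

end

theory Submission
  imports Defs
begin

(* The carrier map is not monotone: the committed vertex (v_0, 1) alone is carried to the output 1,
   but together with a suspended block (v_1, \<bottom>) it spans an edge carried to the output 0.
   The vertex is a point of both realizations, so already its image is constrained to two
   disjoint sets; hence no map at all, continuous or not, is carried by the carrier map.
   This needs only t \<ge> 1 (the edge lies in the t-skeleton) and n \<ge> 1 (the block v_1 exists). *)

lemma indicator_in_simplex_real:
  assumes "finite \<sigma>" and "v \<in> \<sigma>"
  shows "indicator {v} \<in> simplex_real \<sigma>"
  using assms by (auto simp: simplex_real_def indicator_def)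

lemma realization_singleton_simplex: "realization {{w}} = {indicator {w}}"
proof -
  have "x = indicator {w}" if "x \<in> simplex_real {w}" for x :: "'a \<Rightarrow> real"
    using that by (auto simp: simplex_real_def indicator_def)
  then show ?thesis
    by (auto simp: realization_def intro: indicator_in_simplex_real)
qed

lemma no_map_carried_if_shared_vertex_has_disjoint_carriers:
  assumes "\<sigma> \<in> K" and "\<tau> \<in> K" and "finite \<sigma>" and "finite \<tau>" and "v \<in> \<sigma> \<inter> \<tau>"
    and "realization (\<Xi> \<sigma>) \<inter> realization (\<Xi> \<tau>) = {}"
  shows "\<not> (\<exists>f. \<forall>\<rho>\<in>K. f ` simplex_real \<rho> \<subseteq> realization (\<Xi> \<rho>))"
proof
  assume "\<exists>f. \<forall>\<rho>\<in>K. f ` simplex_real \<rho> \<subseteq> realization (\<Xi> \<rho>)"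
  then obtain f where carried: "\<forall>\<rho>\<in>K. f ` simplex_real \<rho> \<subseteq> realization (\<Xi> \<rho>)"
    by blast
  have "indicator {v} \<in> simplex_real \<sigma>" and "indicator {v} \<in> simplex_real \<tau>"
    using assms(3-5) by (simp_all add: indicator_in_simplex_real)
  then have "f (indicator {v}) \<in> realization (\<Xi> \<sigma>)" and "f (indicator {v}) \<in> realization (\<Xi> \<tau>)"
    using carried assms(1,2) by blast+
  with assms(6) show False by blast
qed

lemma CBT_carrier_committed_vertex: "realization (CBT_carrier {(i, In1)}) = {indicator {Out1}}"
  by (simp add: CBT_carrier_def realization_singleton_simplex)

lemma CBT_carrier_edge_to_suspended:
  "realization (CBT_carrier {(i, In1), (j, InBot)}) = {indicator {Out0}}"
  by (simp add: CBT_carrier_def realization_singleton_simplex)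

lemma indicator_Out0_ne_Out1: "(indicator {Out0} :: outval \<Rightarrow> real) \<noteq> indicator {Out1}"
proof
  assume "indicator {Out0} = (indicator {Out1} :: outval \<Rightarrow> real)"
  then have "indicator {Out0} Out0 = (indicator {Out1} Out0 :: real)" by simp
  then show False by simp
qed

theorem lemma1:
  fixes n t :: nat
  assumes "n \<ge> 1" and "0 < t" and "2 * t < n + 1"
  shows "\<not> (\<exists>f. continuous_map (top_of_set (realization (skel t (CBT_input n))))
                                (top_of_set (realization CBT_output)) f
              \<and> (\<forall>\<sigma>\<in>skel t (CBT_input n).
                    f ` simplex_real \<sigma> \<subseteq> realization (CBT_carrier \<sigma>)))"
proof -
  let ?a = "(0::nat, In1)" and ?b = "(1::nat, InBot)"
  have vertex: "{?a} \<in> skel t (CBT_input n)" and edge: "{?a, ?b} \<in> skel t (CBT_input n)"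
    using assms(1,2) by (auto simp: skel_def CBT_input_def)
  have "realization (CBT_carrier {?a}) \<inter> realization (CBT_carrier {?a, ?b}) = {}"
    using indicator_Out0_ne_Out1
    by (simp add: CBT_carrier_committed_vertex CBT_carrier_edge_to_suspended)
  then have "\<not> (\<exists>f. \<forall>\<sigma>\<in>skel t (CBT_input n).
                   f ` simplex_real \<sigma> \<subseteq> realization (CBT_carrier \<sigma>))"
    using no_map_carried_if_shared_vertex_has_disjoint_carriers
        [OF vertex edge, where v = ?a and \<Xi> = CBT_carrier]
    by simp
  then show ?thesis by blast
qed

end
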